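(* Let $0<\epsilon<1$ and $0<\delta<1$. There exists a verification operator $\Omega$ for $|\Psi\rangle$ with $F(1,\delta,\Omega)\ge1-\epsilon$ (i.e. the target state can be verified within infidelity $\epsilon$ and significance level $\delta$ in the adversarial scenario using a single test, with no restriction on the accessible measurements) iff $$\delta(1-\epsilon)\le\max\{2-2\sqrt{1-\delta}-\delta,\;2\delta-1\},$$ or equivalently iff $$\delta\ge\min\Big\{\frac{4(1-\epsilon)}{(2-\epsilon)^2},\frac{1}{1+\epsilon}\Big\}=\begin{cases}\frac{1}{1+\epsilon},&0<\epsilon\le\frac45,\\ \frac{4(1-\epsilon)}{(2-\epsilon)^2},&\frac45\le\epsilon<1.\end{cases}$$
   Context: Let $\mathcal H$ be a Hilbert space of finite dimension $D\ge2$ and $|\Psi\rangle\in\mathcal H$ a unit vector. A verification operator for $|\Psi\rangle$ is a Hermitian operator $\Omega$ on $\mathcal H$ with $0\le\Omega\le1$, $\Omega|\Psi\rangle=|\Psi\rangle$, whose eigenvalue $1$ is nondegenerate. For $N=1$ and a density operator $\rho$ on $\mathcal H^{\otimes2}$ put $p_\rho=\mathrm{tr}[(\Omega\otimes1)\rho]$, $f_\rho=\mathrm{tr}[(\Omega\otimes|\Psi\rangle\langle\Psi|)\rho]$, and $F(1,\delta,\Omega)=\min\{f_\rho/p_\rho:p_\rho\ge\delta\}$, the minimum over permutation-invariant density operators on $\mathcal H^{\otimes2}$. *)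

theory Defs
  imports Complex_Main "Jordan_Normal_Form.Matrix"
begin

text \<open>The Hilbert space H is C^D, vectors are complex vec of dimension D,
operators on H are D x D complex matrices, operators on H (x) H are
(D*D) x (D*D) complex matrices with the standard Kronecker index convention.\<close>

definition mtrace :: "complex mat \<Rightarrow> complex" where
  "mtrace A = (\<Sum>i<dim_row A. A $$ (i, i))"

definition adj :: "complex mat \<Rightarrow> complex mat" where
  "adj A = mat (dim_col A) (dim_row A) (\<lambda>(i, j). cnj (A $$ (j, i)))"

definition cinner :: "complex vec \<Rightarrow> complex vec \<Rightarrow> complex" where
  "cinner v w = (\<Sum>i<dim_vec v. cnj (v $ i) * w $ i)"

definition hermitian :: "nat \<Rightarrow> complex mat \<Rightarrow> bool" where
  "hermitian n A \<longleftrightarrow> A \<in> carrier_mat n n \<and> adj A = A"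

definition psd :: "nat \<Rightarrow> complex mat \<Rightarrow> bool" where
  "psd n A \<longleftrightarrow> hermitian n A \<and> (\<forall>v \<in> carrier_vec n. 0 \<le> Re (cinner v (A *\<^sub>v v)))"

definition unit_vec :: "nat \<Rightarrow> complex vec \<Rightarrow> bool" where
  "unit_vec n \<psi> \<longleftrightarrow> \<psi> \<in> carrier_vec n \<and> cinner \<psi> \<psi> = 1"

definition proj :: "complex vec \<Rightarrow> complex mat" where
  "proj \<psi> = mat (dim_vec \<psi>) (dim_vec \<psi>) (\<lambda>(i, j). \<psi> $ i * cnj (\<psi> $ j))"

definition kron :: "complex mat \<Rightarrow> complex mat \<Rightarrow> complex mat" where
  "kron A B = mat (dim_row A * dim_row B) (dim_col A * dim_col B)
     (\<lambda>(i, j). A $$ (i div dim_row B, j div dim_col B) * B $$ (i mod dim_row B, j mod dim_col B))"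

definition swap_op :: "nat \<Rightarrow> complex mat" where
  "swap_op D = mat (D * D) (D * D) (\<lambda>(i, j). if j = (i mod D) * D + i div D then 1 else 0)"

definition verification_operator :: "nat \<Rightarrow> complex vec \<Rightarrow> complex mat \<Rightarrow> bool" where
  "verification_operator D \<psi> \<Omega> \<longleftrightarrow>
     hermitian D \<Omega> \<and> psd D \<Omega> \<and> psd D (1\<^sub>m D - \<Omega>) \<and> \<Omega> *\<^sub>v \<psi> = \<psi> \<and>
     (\<forall>v \<in> carrier_vec D. \<Omega> *\<^sub>v v = v \<longrightarrow> (\<exists>c. v = c \<cdot>\<^sub>v \<psi>))"

definition density_op :: "nat \<Rightarrow> complex mat \<Rightarrow> bool" where
  "density_op n \<rho> \<longleftrightarrow> psd n \<rho> \<and> mtrace \<rho> = 1"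

definition perm_invariant :: "nat \<Rightarrow> complex mat \<Rightarrow> bool" where
  "perm_invariant D \<rho> \<longleftrightarrow> swap_op D * \<rho> * swap_op D = \<rho>"

definition p_rho :: "nat \<Rightarrow> complex mat \<Rightarrow> complex mat \<Rightarrow> real" where
  "p_rho D \<Omega> \<rho> = Re (mtrace (kron \<Omega> (1\<^sub>m D) * \<rho>))"

definition f_rho :: "nat \<Rightarrow> complex vec \<Rightarrow> complex mat \<Rightarrow> complex mat \<Rightarrow> real" where
  "f_rho D \<psi> \<Omega> \<rho> = Re (mtrace (kron \<Omega> (proj \<psi>) * \<rho>))"

definition F1 :: "nat \<Rightarrow> complex vec \<Rightarrow> real \<Rightarrow> complex mat \<Rightarrow> real" where
  "F1 D \<psi> \<delta> \<Omega> = Inf {f_rho D \<psi> \<Omega> \<rho> / p_rho D \<Omega> \<rho> | \<rho>.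
      \<rho> \<in> carrier_mat (D * D) (D * D) \<and> density_op (D * D) \<rho> \<and> perm_invariant D \<rho> \<and>
      p_rho D \<Omega> \<rho> \<ge> \<delta>}"

end

theory Submission
  imports Defs
begin

(* Let P be the projector onto psi, Q = 1 - P, and Omega_l = P + l Q the homogeneous
   strategy. For a permutation-invariant state rho, the passing probability and the fidelity
   of Omega_l only depend on the three nonnegative numbers a = tr((P (x) P) rho),
   b = tr((P (x) Q) rho) = tr((Q (x) P) rho), c = tr((Q (x) Q) rho), with a + 2b + c = 1:
   p = a + (1 + l) b + l c and f = a + l b.  Minimising f/p over this triangle subject to
   p >= delta shows that l = 1 - sqrt(1 - delta) or l = 0 achieves fidelity 1 - epsilon
   whenever the stated inequality holds.
   Conversely, for an arbitrary verification operator Omega and a unit vector u orthogonal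
   to psi, the separable states a |psi psi><psi psi| + b |psi u><psi u| + b |u psi><u psi|
   + c |u u><u u| realise exactly the same p and f with l = <u|Omega|u>, so the same
   minimisation produces an admissible state of fidelity below 1 - epsilon when the
   inequality fails. *)

section \<open>Operators on \<open>H \<otimes> H\<close> in Kronecker coordinates\<close>

lemma sum_lessThan_mult:
  fixes f :: "nat \<Rightarrow> 'a::comm_monoid_add"
  shows "(\<Sum>i<m * n. f i) = (\<Sum>a<m. \<Sum>b<n. f (a * n + b))"
proof -
  have "(\<Sum>i\<in>{a * n..<a * n + n}. f i) = (\<Sum>b<n. f (a * n + b))" for a
    using sum.shift_bounds_nat_ivl[of f 0 "a * n" n] by (simp add: atLeast0LessThan add.commute)
  then show ?thesis by (simp flip: sum.nat_group)
qed

lemma sum_delta_mult: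
  fixes g :: "nat \<Rightarrow> 'a::semiring_1"
  assumes "finite S" "a \<in> S"
  shows "(\<Sum>l\<in>S. (if l = a then 1 else 0) * g l) = g a"
  using assms by (simp add: if_distrib[of "\<lambda>x. x * _"] cong: if_cong)

lemma pair_index_less:
  fixes a b D :: nat
  assumes "a < D" "b < D"
  shows "a * D + b < D * D"
proof -
  have "a * D + b < Suc a * D" using assms(2) by simp
  also have "\<dots> \<le> D * D" using assms(1) by (intro mult_le_mono1) simp
  finally show ?thesis .
qed

lemma div_less_square: "i < D * D \<Longrightarrow> i div D < (D::nat)"
  by (simp add: less_mult_imp_div_less)

lemma mod_less_square: "i < D * D \<Longrightarrow> i mod D < (D::nat)"
  by (cases "D = 0") simp_all

definition swap_index :: "nat \<Rightarrow> nat \<Rightarrow> nat" where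
  "swap_index D i = (i mod D) * D + i div D"

lemma swap_index_less: "i < D * D \<Longrightarrow> swap_index D i < D * D"
  unfolding swap_index_def by (intro pair_index_less mod_less_square div_less_square)

lemma swap_index_div_mod:
  assumes "i < D * D"
  shows "swap_index D i div D = i mod D" "swap_index D i mod D = i div D"
  using div_less_square[OF assms] mod_less_square[OF assms] unfolding swap_index_def by simp_all

lemma swap_index_swap_index: "i < D * D \<Longrightarrow> swap_index D (swap_index D i) = i"
  using swap_index_div_mod unfolding swap_index_def[of D "swap_index D i"] by simp

lemma swap_index_pair: "a < D \<Longrightarrow> b < D \<Longrightarrow> swap_index D (a * D + b) = b * D + a"
  unfolding swap_index_def by simp

lemma swap_op_conj_index:
  assumes "\<rho> \<in> carrier_mat (D * D) (D * D)" "i < D * D" "j < D * D"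
  shows "(swap_op D * \<rho> * swap_op D) $$ (i, j) = \<rho> $$ (swap_index D i, swap_index D j)"
proof -
  have S: "swap_op D $$ (k, l) = (if l = swap_index D k then 1 else 0)" if "k < D * D" "l < D * D" for k l
    using that unfolding swap_op_def swap_index_def by simp
  have left: "(swap_op D * \<rho>) $$ (i, k) = \<rho> $$ (swap_index D i, k)" if "k < D * D" for k
  proof -
    have "(swap_op D * \<rho>) $$ (i, k) = (\<Sum>l<D * D. (if l = swap_index D i then 1 else 0) * \<rho> $$ (l, k))"
      using assms that S by (auto simp: scalar_prod_def atLeast0LessThan swap_op_def intro!: sum.cong)
    then show ?thesis using swap_index_less[OF assms(2)] by (simp add: sum_delta_mult)
  qed
  have "(swap_op D * \<rho> * swap_op D) $$ (i, j)
      = (\<Sum>k<D * D. (if k = swap_index D j then 1 else 0) * \<rho> $$ (swap_index D i, k))"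
    using assms S left swap_index_swap_index swap_index_less
    by (auto simp: scalar_prod_def atLeast0LessThan swap_op_def mult.commute intro!: sum.cong)
  then show ?thesis using swap_index_less[OF assms(3)] by (simp add: sum_delta_mult)
qed

definition tr_kron :: "nat \<Rightarrow> complex mat \<Rightarrow> complex mat \<Rightarrow> complex mat \<Rightarrow> complex" where
  "tr_kron D A B \<rho> =
     (\<Sum>i<D * D. \<Sum>j<D * D. A $$ (i div D, j div D) * B $$ (i mod D, j mod D) * \<rho> $$ (j, i))"

lemma mtrace_kron_mult:
  assumes "A \<in> carrier_mat D D" "B \<in> carrier_mat D D" "\<rho> \<in> carrier_mat (D * D) (D * D)"
  shows "mtrace (kron A B * \<rho>) = tr_kron D A B \<rho>"
  using assms unfolding mtrace_def tr_kron_def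
  by (auto simp: kron_def scalar_prod_def atLeast0LessThan intro!: sum.cong)

lemma tr_kron_expand:
  "tr_kron D A B \<rho> = (\<Sum>a1<D. \<Sum>a2<D. \<Sum>b1<D. \<Sum>b2<D.
     A $$ (a1, b1) * B $$ (a2, b2) * \<rho> $$ (b1 * D + b2, a1 * D + a2))"
  unfolding tr_kron_def sum_lessThan_mult by (auto intro!: sum.cong)

lemma tr_kron_linear_left:
  assumes "\<And>r s. r < D \<Longrightarrow> s < D \<Longrightarrow> A $$ (r, s) = x * A1 $$ (r, s) + y * A2 $$ (r, s)"
  shows "tr_kron D A B \<rho> = x * tr_kron D A1 B \<rho> + y * tr_kron D A2 B \<rho>"
  unfolding tr_kron_expand using assms
  by (simp add: sum_distrib_left sum.distrib algebra_simps)

lemma tr_kron_linear_right: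
  assumes "\<And>r s. r < D \<Longrightarrow> s < D \<Longrightarrow> B $$ (r, s) = x * B1 $$ (r, s) + y * B2 $$ (r, s)"
  shows "tr_kron D A B \<rho> = x * tr_kron D A B1 \<rho> + y * tr_kron D A B2 \<rho>"
  unfolding tr_kron_expand using assms
  by (simp add: sum_distrib_left sum.distrib algebra_simps)

lemma tr_kron_one_one:
  assumes "\<rho> \<in> carrier_mat (D * D) (D * D)"
  shows "tr_kron D (1\<^sub>m D) (1\<^sub>m D) \<rho> = mtrace \<rho>"
proof -
  have "tr_kron D (1\<^sub>m D) (1\<^sub>m D) \<rho> = (\<Sum>a1<D. \<Sum>a2<D. \<rho> $$ (a1 * D + a2, a1 * D + a2))"
    unfolding tr_kron_expand
    by (intro sum.cong refl)
      (simp add: mult.assoc flip: sum_distrib_left, simp add: if_distrib[of "\<lambda>x. x * _"] cong: if_cong)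
  then show ?thesis using assms by (simp add: mtrace_def sum_lessThan_mult)
qed

lemma tr_kron_swap:
  assumes "\<rho> \<in> carrier_mat (D * D) (D * D)" "perm_invariant D \<rho>"
  shows "tr_kron D A B \<rho> = tr_kron D B A \<rho>"
proof -
  have \<rho>_swap: "\<rho> $$ (b1 * D + b2, a1 * D + a2) = \<rho> $$ (b2 * D + b1, a2 * D + a1)"
    if "a1 < D" "a2 < D" "b1 < D" "b2 < D" for a1 a2 b1 b2
    using swap_op_conj_index[OF assms(1) pair_index_less pair_index_less] assms(2) that
    unfolding perm_invariant_def by (simp add: swap_index_pair)
  have "tr_kron D A B \<rho> = (\<Sum>a1<D. \<Sum>a2<D. \<Sum>b1<D. \<Sum>b2<D.
      B $$ (a2, b2) * A $$ (a1, b1) * \<rho> $$ (b2 * D + b1, a2 * D + a1))"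
    unfolding tr_kron_expand using \<rho>_swap by (auto simp: mult.commute intro!: sum.cong)
  also have "\<dots> = tr_kron D B A \<rho>"
    unfolding tr_kron_expand
    by (subst sum.swap) (intro sum.cong refl sum.swap)
  finally show ?thesis .
qed

section \<open>Inner products and positivity\<close>

lemma cinner_mult_mat_vec:
  assumes "A \<in> carrier_mat n n" "x \<in> carrier_vec n"
  shows "cinner x (A *\<^sub>v x) = (\<Sum>a<n. \<Sum>b<n. cnj (x $ a) * A $$ (a, b) * x $ b)"
  using assms unfolding cinner_def
  by (auto simp: scalar_prod_def atLeast0LessThan sum_distrib_left mult_ac intro!: sum.cong)

lemma psd_quadratic_form_nonneg:
  assumes "psd n \<rho>" "w \<in> carrier_vec n"
  shows "0 \<le> Re (\<Sum>i<n. \<Sum>j<n. w $ i * cnj (w $ j) * \<rho> $$ (j, i))"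
proof -
  have "(\<Sum>i<n. \<Sum>j<n. w $ i * cnj (w $ j) * \<rho> $$ (j, i)) = cinner w (\<rho> *\<^sub>v w)"
    using assms unfolding psd_def hermitian_def
    by (subst cinner_mult_mat_vec) (auto simp: mult_ac intro: sum.swap)
  then show ?thesis using assms unfolding psd_def by simp
qed

lemma cinner_self: "cinner v v = complex_of_real (\<Sum>i<dim_vec v. (cmod (v $ i))\<^sup>2)"
  unfolding cinner_def of_real_sum
  by (intro sum.cong refl) (metis complex_norm_square mult.commute)

lemma cinner_self_nonneg: "0 \<le> Re (cinner v v)"
  unfolding cinner_self by (auto intro: sum_nonneg)

lemma cinner_commute: "dim_vec v = dim_vec w \<Longrightarrow> cinner v w = cnj (cinner w v)"
  unfolding cinner_def by (simp add: mult.commute)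

lemma cinner_smult_right: "dim_vec v = dim_vec w \<Longrightarrow> cinner v (c \<cdot>\<^sub>v w) = c * cinner v w"
  unfolding cinner_def by (simp add: sum_distrib_left mult_ac)

lemma cinner_diff_right:
  assumes "v \<in> carrier_vec n" "w \<in> carrier_vec n"
  shows "cinner v (v - w) = cinner v v - cinner v w"
  using assms unfolding cinner_def sum_subtractf[symmetric]
  by (intro sum.cong refl) (auto simp: algebra_simps)

lemma cinner_one_minus_mat:
  assumes "A \<in> carrier_mat n n" "v \<in> carrier_vec n"
  shows "cinner v ((1\<^sub>m n - A) *\<^sub>v v) = cinner v v - cinner v (A *\<^sub>v v)"
  using minus_mult_distrib_mat_vec[OF one_carrier_mat assms]
    cinner_diff_right[OF assms(2) mult_mat_vec_carrier[OF assms]] assms(2)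
  by simp

lemma cmod_cinner_unit_le:
  assumes "unit_vec D \<psi>" "v \<in> carrier_vec D"
  shows "(cmod (cinner \<psi> v))\<^sup>2 \<le> Re (cinner v v)"
proof -
  define z where "z = cinner \<psi> v"
  define w where "w = vec D (\<lambda>i. v $ i - z * \<psi> $ i)"
  have d: "dim_vec \<psi> = D" "dim_vec v = D" and \<psi>\<psi>: "cinner \<psi> \<psi> = 1"
    using assms unfolding unit_vec_def by auto
  have v\<psi>: "cinner v \<psi> = cnj z" unfolding z_def by (rule cinner_commute) (simp add: d)
  have "cinner w w = (\<Sum>i<D. cnj (v $ i) * v $ i) - cnj z * (\<Sum>i<D. cnj (\<psi> $ i) * v $ i)
      - z * (\<Sum>i<D. cnj (v $ i) * \<psi> $ i) + cnj z * z * (\<Sum>i<D. cnj (\<psi> $ i) * \<psi> $ i)"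
    unfolding w_def cinner_def
    by (simp add: sum_distrib_left sum_subtractf[symmetric] sum.distrib[symmetric] algebra_simps)
  also have "\<dots> = cinner v v - cnj z * z"
    using \<psi>\<psi> v\<psi> d unfolding cinner_def z_def by simp
  finally have "Re (cinner v v) = Re (cinner w w) + (cmod z)\<^sup>2"
    by (simp add: complex_mult_cnj cmod_def power2_eq_square mult.commute)
  then show ?thesis using cinner_self_nonneg[of w] unfolding z_def by simp
qed

definition orth_projector :: "nat \<Rightarrow> complex mat \<Rightarrow> bool" where
  "orth_projector D X \<longleftrightarrow> (\<forall>r<D. \<forall>s<D. X $$ (r, s) = (\<Sum>k<D. X $$ (r, k) * cnj (X $$ (s, k))))"

lemma proj_carrier [simp]: "\<psi> \<in> carrier_vec D \<Longrightarrow> proj \<psi> \<in> carrier_mat D D"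
  unfolding proj_def by auto

lemma orth_projector_proj:
  assumes "unit_vec D \<psi>"
  shows "orth_projector D (proj \<psi>)"
proof -
  have d: "dim_vec \<psi> = D" and \<psi>\<psi>: "(\<Sum>k<D. cnj (\<psi> $ k) * \<psi> $ k) = 1"
    using assms unfolding unit_vec_def cinner_def by auto
  have "(\<Sum>k<D. proj \<psi> $$ (r, k) * cnj (proj \<psi> $$ (s, k))) = proj \<psi> $$ (r, s)"
    if "r < D" "s < D" for r s
  proof -
    have "(\<Sum>k<D. proj \<psi> $$ (r, k) * cnj (proj \<psi> $$ (s, k)))
        = (\<Sum>k<D. \<psi> $ r * cnj (\<psi> $ s) * (cnj (\<psi> $ k) * \<psi> $ k))"
      using that d by (intro sum.cong refl) (auto simp: proj_def mult_ac)
    also have "\<dots> = \<psi> $ r * cnj (\<psi> $ s)" by (simp add: sum_distrib_left[symmetric] \<psi>\<psi>)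
    finally show ?thesis using that d by (simp add: proj_def)
  qed
  then show ?thesis unfolding orth_projector_def by simp
qed

lemma orth_projector_one_minus_proj:
  assumes "unit_vec D \<psi>"
  shows "orth_projector D (1\<^sub>m D - proj \<psi>)"
proof -
  have d: "dim_vec \<psi> = D" and \<psi>\<psi>: "(\<Sum>k<D. cnj (\<psi> $ k) * \<psi> $ k) = 1"
    using assms unfolding unit_vec_def cinner_def by auto
  have "(\<Sum>k<D. (1\<^sub>m D - proj \<psi>) $$ (r, k) * cnj ((1\<^sub>m D - proj \<psi>) $$ (s, k)))
      = (1\<^sub>m D - proj \<psi>) $$ (r, s)" if rs: "r < D" "s < D" for r s
  proof -
    have "(\<Sum>k<D. (1\<^sub>m D - proj \<psi>) $$ (r, k) * cnj ((1\<^sub>m D - proj \<psi>) $$ (s, k)))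
      = (\<Sum>k<D. (if k = r then (if k = s then 1 else 0) else 0) - (if k = r then cnj (\<psi> $ s) * \<psi> $ k else 0)
         - (if k = s then \<psi> $ r * cnj (\<psi> $ k) else 0) + \<psi> $ r * cnj (\<psi> $ s) * (cnj (\<psi> $ k) * \<psi> $ k))"
      using rs d by (intro sum.cong refl) (auto simp: proj_def algebra_simps)
    also have "\<dots> = (if r = s then 1 else 0) - \<psi> $ r * cnj (\<psi> $ s)"
      using rs by (simp add: sum.distrib sum_subtractf sum_distrib_left[symmetric] \<psi>\<psi>)
    finally show ?thesis using rs d by (simp add: proj_def)
  qed
  then show ?thesis unfolding orth_projector_def by simp
qed

lemma sum_swap_pairs:
  "(\<Sum>i\<in>A. \<Sum>j\<in>A. \<Sum>k\<in>B. \<Sum>l\<in>B. g i j k l) = (\<Sum>k\<in>B. \<Sum>l\<in>B. \<Sum>i\<in>A. \<Sum>j\<in>A. g i j k l)"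
proof -
  have "(\<Sum>i\<in>A. \<Sum>j\<in>A. \<Sum>k\<in>B. \<Sum>l\<in>B. g i j k l) = (\<Sum>i\<in>A. \<Sum>k\<in>B. \<Sum>l\<in>B. \<Sum>j\<in>A. g i j k l)"
    by (intro sum.cong refl) (subst sum.swap, intro sum.cong refl sum.swap)
  also have "\<dots> = (\<Sum>k\<in>B. \<Sum>l\<in>B. \<Sum>i\<in>A. \<Sum>j\<in>A. g i j k l)"
    by (subst sum.swap, intro sum.cong refl sum.swap)
  finally show ?thesis .
qed

text \<open>Writing \<open>X = X X\<^sup>*\<close> and \<open>Y = Y Y\<^sup>*\<close> exhibits \<open>tr((X \<otimes> Y) \<rho>)\<close> as a sum of
  quadratic forms of \<open>\<rho>\<close>, in the vectors \<open>X e\<^sub>k \<otimes> Y e\<^sub>l\<close>.\<close>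
lemma tr_kron_orth_projector_nonneg:
  assumes "orth_projector D X" "orth_projector D Y" "psd (D * D) \<rho>"
  shows "0 \<le> Re (tr_kron D X Y \<rho>)"
proof -
  define w where "w k l = vec (D * D) (\<lambda>i. X $$ (i div D, k) * Y $$ (i mod D, l))" for k l
  have XY: "X $$ (i div D, j div D) * Y $$ (i mod D, j mod D) =
      (\<Sum>k<D. \<Sum>l<D. w k l $ i * cnj (w k l $ j))" if "i < D * D" "j < D * D" for i j
  proof -
    have "X $$ (i div D, j div D) = (\<Sum>k<D. X $$ (i div D, k) * cnj (X $$ (j div D, k)))"
      using assms(1) div_less_square[OF that(1)] div_less_square[OF that(2)]
      unfolding orth_projector_def by blast
    moreover have "Y $$ (i mod D, j mod D) = (\<Sum>l<D. Y $$ (i mod D, l) * cnj (Y $$ (j mod D, l)))"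
      using assms(2) mod_less_square[OF that(1)] mod_less_square[OF that(2)]
      unfolding orth_projector_def by blast
    ultimately have "X $$ (i div D, j div D) * Y $$ (i mod D, j mod D) =
      (\<Sum>k<D. X $$ (i div D, k) * cnj (X $$ (j div D, k))) * (\<Sum>l<D. Y $$ (i mod D, l) * cnj (Y $$ (j mod D, l)))"
      by simp
    then show ?thesis
      using that unfolding w_def sum_product by (simp add: mult_ac)
  qed
  have "tr_kron D X Y \<rho> = (\<Sum>i<D * D. \<Sum>j<D * D. \<Sum>k<D. \<Sum>l<D. w k l $ i * cnj (w k l $ j) * \<rho> $$ (j, i))"
    unfolding tr_kron_def using XY by (simp add: sum_distrib_right)
  also have "\<dots> = (\<Sum>k<D. \<Sum>l<D. \<Sum>i<D * D. \<Sum>j<D * D. w k l $ i * cnj (w k l $ j) * \<rho> $$ (j, i))"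
    by (rule sum_swap_pairs)
  finally have t: "Re (tr_kron D X Y \<rho>)
      = (\<Sum>k<D. \<Sum>l<D. Re (\<Sum>i<D * D. \<Sum>j<D * D. w k l $ i * cnj (w k l $ j) * \<rho> $$ (j, i)))"
    by simp
  show ?thesis
    unfolding t by (intro sum_nonneg psd_quadratic_form_nonneg[OF assms(3)]) (simp add: w_def)
qed

lemma unit_vec_normalize:
  assumes "v \<in> carrier_vec D" "cinner v v = complex_of_real N" "0 < N"
  shows "unit_vec D (complex_of_real (1 / sqrt N) \<cdot>\<^sub>v v)"
proof -
  let ?c = "complex_of_real (1 / sqrt N)"
  have "1 / sqrt N * (1 / sqrt N) = 1 / N"
    using assms(3) by (simp add: field_simps flip: real_sqrt_mult)
  then have "cinner (?c \<cdot>\<^sub>v v) (?c \<cdot>\<^sub>v v) = complex_of_real (1 / N) * cinner v v"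
    unfolding cinner_def sum_distrib_left
    by (intro sum.cong refl) (auto simp: mult_ac simp flip: of_real_mult)
  then show ?thesis using assms unfolding unit_vec_def by (simp flip: of_real_mult)
qed

lemma exists_unit_orthogonal:
  assumes "2 \<le> D" "unit_vec D \<psi>"
  shows "\<exists>u. unit_vec D u \<and> cinner \<psi> u = 0"
proof -
  have d: "dim_vec \<psi> = D" and \<psi>\<psi>: "(\<Sum>k<D. cnj (\<psi> $ k) * \<psi> $ k) = 1"
    using assms unfolding unit_vec_def cinner_def by auto
  have norm1: "(\<Sum>k<D. (cmod (\<psi> $ k))\<^sup>2) = 1"
    using cinner_self[of \<psi>] assms unfolding unit_vec_def d by (metis of_real_eq_1_iff)
  obtain j where j: "j < D" "(cmod (\<psi> $ j))\<^sup>2 < 1"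
  proof (rule ccontr)
    assume "\<not> thesis"
    then have "(\<Sum>k<D. (1::real)) \<le> (\<Sum>k<D. (cmod (\<psi> $ k))\<^sup>2)"
      using that by (intro sum_mono) force
    then show False using norm1 assms(1) by simp
  qed
  txt \<open>Since \<open>|\<psi>\<^sub>j| < 1\<close>, Gram--Schmidt against \<open>\<psi>\<close> leaves a nonzero multiple of \<open>e\<^sub>j\<close>.\<close>
  define v where "v = vec D (\<lambda>i. (if i = j then 1 else 0) - cnj (\<psi> $ j) * \<psi> $ i)"
  have "cinner \<psi> v
      = (\<Sum>i<D. (if i = j then cnj (\<psi> $ i) else 0) - cnj (\<psi> $ j) * (cnj (\<psi> $ i) * \<psi> $ i))"
    unfolding cinner_def v_def d by (intro sum.cong refl) (auto simp: algebra_simps)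
  also have "\<dots> = 0" using j by (simp add: sum_subtractf sum_distrib_left[symmetric] \<psi>\<psi>)
  finally have orth: "cinner \<psi> v = 0" .
  have "cinner v v = (\<Sum>i<D. (if i = j then 1 else 0) - (if i = j then cnj (\<psi> $ j) * \<psi> $ i else 0)
       - (if i = j then \<psi> $ j * cnj (\<psi> $ i) else 0) + \<psi> $ j * cnj (\<psi> $ j) * (cnj (\<psi> $ i) * \<psi> $ i))"
    unfolding cinner_def v_def by (intro sum.cong refl) (auto simp: algebra_simps)
  also have "\<dots> = 1 - cnj (\<psi> $ j) * \<psi> $ j"
    using j by (simp add: sum.distrib sum_subtractf sum_distrib_left[symmetric] \<psi>\<psi>)
  also have "\<dots> = complex_of_real (1 - (cmod (\<psi> $ j))\<^sup>2)"
    by (simp add: mult.commute) (metis complex_norm_square of_real_power)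
  finally have "unit_vec D (complex_of_real (1 / sqrt (1 - (cmod (\<psi> $ j))\<^sup>2)) \<cdot>\<^sub>v v)"
    using j by (intro unit_vec_normalize) (simp_all add: v_def)
  moreover have "cinner \<psi> (complex_of_real (1 / sqrt (1 - (cmod (\<psi> $ j))\<^sup>2)) \<cdot>\<^sub>v v) = 0"
    using orth d by (simp add: cinner_smult_right v_def)
  ultimately show ?thesis by blast
qed

lemma cinner_mult_mat_vec_two_point:
  fixes x y :: complex
  assumes "A \<in> carrier_mat n n" "i < n" "j < n" "i \<noteq> j"
  defines "v \<equiv> vec n (\<lambda>k. if k = i then x else if k = j then y else 0)"
  shows "cinner v (A *\<^sub>v v) = cnj x * A $$ (i, i) * x + cnj x * A $$ (i, j) * y
    + cnj y * A $$ (j, i) * x + cnj y * A $$ (j, j) * y"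
proof -
  have v: "v $ k = (if k = i then x else 0) + (if k = j then y else 0)" if "k < n" for k
    using that assms(4) unfolding v_def by simp
  have vc: "v \<in> carrier_vec n" unfolding v_def by simp
  show ?thesis
    using assms(1-4) unfolding cinner_mult_mat_vec[OF assms(1) vc]
    by (simp add: v ring_distribs if_distrib[of cnj] sum.distrib if_distrib[of "\<lambda>x. x * _"] if_distrib[of "\<lambda>x. _ * x"] cong: if_cong)
qed

lemma psd_diag:
  assumes "psd n A" "i < n"
  shows "0 \<le> Re (A $$ (i, i))" "Im (A $$ (i, i)) = 0"
proof -
  have A: "A \<in> carrier_mat n n" "adj A = A" using assms unfolding psd_def hermitian_def by auto
  have "cnj (A $$ (i, i)) = A $$ (i, i)"
    using arg_cong[OF A(2), of "\<lambda>M. M $$ (i, i)"] A(1) assms(2) by (simp add: adj_def)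
  then show "Im (A $$ (i, i)) = 0" by (metis Reals_cnj_iff complex_is_Real_iff)
  define v where "v = vec n (\<lambda>k. if k = i then 1 else 0 :: complex)"
  have v: "v \<in> carrier_vec n" unfolding v_def by simp
  have "cinner v (A *\<^sub>v v) = A $$ (i, i)"
    using A(1) assms(2) unfolding cinner_mult_mat_vec[OF A(1) v]
    by (simp add: v_def if_distrib[of cnj] if_distrib[of "\<lambda>x. x * _"] if_distrib[of "\<lambda>x. _ * x"] cong: if_cong)
  then show "0 \<le> Re (A $$ (i, i))" using assms v unfolding psd_def by metis
qed

lemma psd_cmod_entry_le:
  assumes "psd n A" "i < n" "j < n"
  shows "cmod (A $$ (i, j)) \<le> (Re (A $$ (i, i)) + Re (A $$ (j, j))) / 2"
proof (cases "i = j \<or> A $$ (i, j) = 0")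
  case True
  then show ?thesis using psd_diag[OF assms(1,2)] psd_diag[OF assms(1,3)] by (auto simp: cmod_def)
next
  case False
  have A: "A \<in> carrier_mat n n" "adj A = A" using assms unfolding psd_def hermitian_def by auto
  have ji: "A $$ (j, i) = cnj (A $$ (i, j))"
    using arg_cong[OF A(2), of "\<lambda>M. M $$ (j, i)"] A(1) assms(2,3) by (simp add: adj_def)
  define r where "r = cmod (A $$ (i, j))"
  have r: "0 < r" using False unfolding r_def by simp
  txt \<open>The phase \<open>y\<close> of \<open>e\<^sub>i + y e\<^sub>j\<close> is chosen to make the cross terms equal to \<open>-2 r\<close>.\<close>
  define y where "y = - cnj (A $$ (i, j)) / complex_of_real r"
  have "cnj (A $$ (i, j)) * A $$ (i, j) = complex_of_real (r\<^sup>2)"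
    unfolding r_def by (metis complex_norm_square mult.commute)
  then have y: "A $$ (i, j) * y = - complex_of_real r" "cnj y * y = 1"
    using r unfolding y_def by (simp_all add: field_simps power2_eq_square)
  have "0 \<le> Re (cinner (vec n (\<lambda>k. if k = i then 1 else if k = j then y else 0))
      (A *\<^sub>v vec n (\<lambda>k. if k = i then 1 else if k = j then y else 0)))"
    using assms(1) unfolding psd_def by simp
  also have "\<dots> = Re (A $$ (i, i) + (- complex_of_real r) + (- complex_of_real r) + A $$ (j, j))"
  proof -
    have t1: "cnj 1 * A $$ (i, j) * y = - complex_of_real r" using y(1) by simp
    have t2: "cnj y * A $$ (j, i) * 1 = - complex_of_real r"
      using ji y(1) by (metis complex_cnj_minus complex_cnj_complex_of_real complex_cnj_mult mult.commute mult_1_right)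
    have t3: "cnj y * A $$ (j, j) * y = A $$ (j, j)"
    proof -
      have "cnj y * A $$ (j, j) * y = A $$ (j, j) * (cnj y * y)" by (simp only: mult_ac)
      then show ?thesis using y(2) by simp
    qed
    show ?thesis
      using cinner_mult_mat_vec_two_point[OF A(1) assms(2,3), of 1 y] False
      unfolding t1 t2 t3 by simp
  qed
  finally show ?thesis unfolding r_def by simp
qed

section \<open>Homogeneous strategies\<close>

definition homogeneous_op :: "nat \<Rightarrow> complex vec \<Rightarrow> real \<Rightarrow> complex mat" where
  "homogeneous_op D \<psi> l = mat D D (\<lambda>(i, j).
     complex_of_real (1 - l) * (\<psi> $ i * cnj (\<psi> $ j)) + (if i = j then complex_of_real l else 0))"

lemma homogeneous_op_carrier [simp]: "homogeneous_op D \<psi> l \<in> carrier_mat D D"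
  unfolding homogeneous_op_def by simp

lemma homogeneous_op_mult_vec:
  assumes "v \<in> carrier_vec D" "\<psi> \<in> carrier_vec D"
  shows "homogeneous_op D \<psi> l *\<^sub>v v
    = vec D (\<lambda>i. complex_of_real (1 - l) * cinner \<psi> v * \<psi> $ i + complex_of_real l * v $ i)"
proof (rule eq_vecI)
  fix i assume "i < dim_vec (vec D (\<lambda>i. complex_of_real (1 - l) * cinner \<psi> v * \<psi> $ i + complex_of_real l * v $ i))"
  then have i: "i < D" by simp
  have "(homogeneous_op D \<psi> l *\<^sub>v v) $ i = (\<Sum>j<D. complex_of_real (1 - l) * \<psi> $ i * (cnj (\<psi> $ j) * v $ j)
      + (if i = j then complex_of_real l * v $ j else 0))"
    using i assms
    by (auto simp: homogeneous_op_def scalar_prod_def atLeast0LessThan algebra_simps intro!: sum.cong)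
  also have "\<dots> = complex_of_real (1 - l) * cinner \<psi> v * \<psi> $ i + complex_of_real l * v $ i"
    using i assms by (simp add: sum.distrib cinner_def sum_distrib_left mult_ac)
  finally show "(homogeneous_op D \<psi> l *\<^sub>v v) $ i
      = vec D (\<lambda>i. complex_of_real (1 - l) * cinner \<psi> v * \<psi> $ i + complex_of_real l * v $ i) $ i"
    using i by simp
qed (simp add: homogeneous_op_def)

lemma cinner_vec_lincomb:
  assumes "dim_vec v = n" "dim_vec w = n" "dim_vec x = n"
  shows "cinner v (vec n (\<lambda>i. \<alpha> * w $ i + \<beta> * x $ i)) = \<alpha> * cinner v w + \<beta> * cinner v x"
  using assms unfolding cinner_def by (simp add: sum.distrib sum_distrib_left algebra_simps)

lemma cinner_homogeneous_op:
  assumes "v \<in> carrier_vec D" "\<psi> \<in> carrier_vec D"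
  shows "cinner v (homogeneous_op D \<psi> l *\<^sub>v v)
    = complex_of_real (1 - l) * (cinner \<psi> v * cnj (cinner \<psi> v)) + complex_of_real l * cinner v v"
proof -
  have "cinner v (homogeneous_op D \<psi> l *\<^sub>v v)
      = complex_of_real (1 - l) * cinner \<psi> v * cinner v \<psi> + complex_of_real l * cinner v v"
    using assms unfolding homogeneous_op_mult_vec[OF assms] by (simp add: cinner_vec_lincomb)
  moreover have "cinner v \<psi> = cnj (cinner \<psi> v)" using assms by (intro cinner_commute) auto
  ultimately show ?thesis by (simp add: mult.assoc)
qed

lemma verification_operator_homogeneous_op:
  assumes "unit_vec D \<psi>" "0 \<le> l" "l < 1"
  shows "verification_operator D \<psi> (homogeneous_op D \<psi> l)"
proof -
  let ?\<Omega> = "homogeneous_op D \<psi> l"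
  have \<psi>: "\<psi> \<in> carrier_vec D" "dim_vec \<psi> = D" and \<psi>\<psi>: "cinner \<psi> \<psi> = 1"
    using assms unfolding unit_vec_def by auto
  have herm: "hermitian D ?\<Omega>" "hermitian D (1\<^sub>m D - ?\<Omega>)"
    unfolding hermitian_def adj_def by (auto simp: homogeneous_op_def)
  have quad: "Re (cinner v (?\<Omega> *\<^sub>v v)) = (1 - l) * (cmod (cinner \<psi> v))\<^sup>2 + l * Re (cinner v v)"
    if "v \<in> carrier_vec D" for v
    using that \<psi> by (simp add: cinner_homogeneous_op complex_mult_cnj cinner_self cmod_power2)
  have "0 \<le> Re (cinner v (?\<Omega> *\<^sub>v v))" if "v \<in> carrier_vec D" for v
    using quad[OF that] assms cinner_self_nonneg[of v] by simp
  moreover have "0 \<le> Re (cinner v ((1\<^sub>m D - ?\<Omega>) *\<^sub>v v))" if "v \<in> carrier_vec D" for v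
    using quad[OF that] mult_left_mono[OF cmod_cinner_unit_le[OF assms(1) that], of "1 - l"] assms(3)
    by (simp add: cinner_one_minus_mat[OF homogeneous_op_carrier that] algebra_simps)
  moreover have "?\<Omega> *\<^sub>v \<psi> = \<psi>"
    using \<psi> \<psi>\<psi> by (auto simp: homogeneous_op_mult_vec algebra_simps)
  moreover have "\<exists>c. v = c \<cdot>\<^sub>v \<psi>" if v: "v \<in> carrier_vec D" "?\<Omega> *\<^sub>v v = v" for v
  proof -
    have "v $ i = cinner \<psi> v * \<psi> $ i" if "i < D" for i
    proof -
      have "(?\<Omega> *\<^sub>v v) $ i = v $ i" using v by simp
      then have "complex_of_real (1 - l) * cinner \<psi> v * \<psi> $ i + complex_of_real l * v $ i = v $ i"
        using that unfolding homogeneous_op_mult_vec[OF v(1) \<psi>(1)] by simp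
      then have "complex_of_real (1 - l) * (cinner \<psi> v * \<psi> $ i - v $ i) = 0"
        by (simp add: algebra_simps)
      then show ?thesis using assms by simp
    qed
    then have "v = cinner \<psi> v \<cdot>\<^sub>v \<psi>" using v \<psi> by (intro eq_vecI) auto
    then show ?thesis by blast
  qed
  ultimately show ?thesis
    unfolding verification_operator_def psd_def using herm by blast
qed

definition sym_weights :: "real \<Rightarrow> real \<Rightarrow> real \<Rightarrow> bool" where
  "sym_weights a b c \<longleftrightarrow> 0 \<le> a \<and> 0 \<le> b \<and> 0 \<le> c \<and> a + 2 * b + c = 1"

lemma sym_weights_proj_traces:
  assumes \<psi>: "unit_vec D \<psi>"
    and \<rho>: "\<rho> \<in> carrier_mat (D * D) (D * D)" "density_op (D * D) \<rho>" "perm_invariant D \<rho>"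
  defines "P \<equiv> proj \<psi>" and "Q \<equiv> 1\<^sub>m D - proj \<psi>"
  shows "sym_weights (Re (tr_kron D P P \<rho>)) (Re (tr_kron D P Q \<rho>)) (Re (tr_kron D Q Q \<rho>))"
    and "Re (tr_kron D P (1\<^sub>m D) \<rho>) = Re (tr_kron D P P \<rho>) + Re (tr_kron D P Q \<rho>)"
proof -
  let ?I = "1\<^sub>m D :: complex mat"
  have Q_entry: "Q $$ (r, s) = 1 * ?I $$ (r, s) + (-1) * P $$ (r, s)" if "r < D" "s < D" for r s
    using that \<psi> unfolding unit_vec_def by (auto simp: Q_def P_def proj_def)
  have PQ: "tr_kron D P Q \<rho> = 1 * tr_kron D P ?I \<rho> + (-1) * tr_kron D P P \<rho>"
    by (rule tr_kron_linear_right) (rule Q_entry)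
  have IQ: "tr_kron D ?I Q \<rho> = 1 * tr_kron D ?I ?I \<rho> + (-1) * tr_kron D ?I P \<rho>"
    by (rule tr_kron_linear_right) (rule Q_entry)
  have QQ: "tr_kron D Q Q \<rho> = 1 * tr_kron D ?I Q \<rho> + (-1) * tr_kron D P Q \<rho>"
    by (rule tr_kron_linear_left) (rule Q_entry)
  have IP: "tr_kron D ?I P \<rho> = tr_kron D P ?I \<rho>" using tr_kron_swap[OF \<rho>(1,3)] .
  have II: "tr_kron D ?I ?I \<rho> = 1"
    using tr_kron_one_one[OF \<rho>(1)] \<rho>(2) unfolding density_op_def by simp
  have "psd (D * D) \<rho>" using \<rho>(2) unfolding density_op_def by simp
  moreover have "orth_projector D P" "orth_projector D Q"
    unfolding P_def Q_def using orth_projector_proj[OF \<psi>] orth_projector_one_minus_proj[OF \<psi>] .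
  ultimately have "0 \<le> Re (tr_kron D P P \<rho>)" "0 \<le> Re (tr_kron D P Q \<rho>)" "0 \<le> Re (tr_kron D Q Q \<rho>)"
    using tr_kron_orth_projector_nonneg by auto
  moreover have "Re (tr_kron D P P \<rho>) + 2 * Re (tr_kron D P Q \<rho>) + Re (tr_kron D Q Q \<rho>) = 1"
    using PQ QQ IQ IP II by simp
  ultimately show "sym_weights (Re (tr_kron D P P \<rho>)) (Re (tr_kron D P Q \<rho>)) (Re (tr_kron D Q Q \<rho>))"
    unfolding sym_weights_def by simp
  show "Re (tr_kron D P ?I \<rho>) = Re (tr_kron D P P \<rho>) + Re (tr_kron D P Q \<rho>)"
    using PQ by simp
qed

lemma homogeneous_op_pass_fid:
  assumes \<psi>: "unit_vec D \<psi>"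
    and \<rho>: "\<rho> \<in> carrier_mat (D * D) (D * D)" "density_op (D * D) \<rho>" "perm_invariant D \<rho>"
  shows "\<exists>a b c. sym_weights a b c \<and>
     p_rho D (homogeneous_op D \<psi> l) \<rho> = a + (1 + l) * b + l * c \<and>
     f_rho D \<psi> (homogeneous_op D \<psi> l) \<rho> = a + l * b"
proof -
  have d: "\<psi> \<in> carrier_vec D" using \<psi> unfolding unit_vec_def by simp
  let ?P = "proj \<psi>" and ?I = "1\<^sub>m D :: complex mat" and ?\<Omega> = "homogeneous_op D \<psi> l"
  define a where "a = Re (tr_kron D ?P ?P \<rho>)"
  define b where "b = Re (tr_kron D ?P (?I - ?P) \<rho>)"
  define c where "c = Re (tr_kron D (?I - ?P) (?I - ?P) \<rho>)"
  have w: "sym_weights a b c" and PI: "Re (tr_kron D ?P ?I \<rho>) = a + b"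
    unfolding a_def b_def c_def using sym_weights_proj_traces[OF \<psi> \<rho>] by simp_all
  have \<Omega>_entry: "?\<Omega> $$ (r, s) = complex_of_real (1 - l) * ?P $$ (r, s) + complex_of_real l * ?I $$ (r, s)"
    if "r < D" "s < D" for r s
    using that d by (simp add: homogeneous_op_def proj_def)
  have "p_rho D ?\<Omega> \<rho> = Re (tr_kron D ?\<Omega> ?I \<rho>)"
    unfolding p_rho_def using mtrace_kron_mult[OF homogeneous_op_carrier one_carrier_mat \<rho>(1)] by simp
  also have "tr_kron D ?\<Omega> ?I \<rho>
      = complex_of_real (1 - l) * tr_kron D ?P ?I \<rho> + complex_of_real l * tr_kron D ?I ?I \<rho>"
    by (rule tr_kron_linear_left) (rule \<Omega>_entry)
  also have "tr_kron D ?I ?I \<rho> = 1"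
    using tr_kron_one_one[OF \<rho>(1)] \<rho>(2) unfolding density_op_def by simp
  also have "Re (complex_of_real (1 - l) * tr_kron D ?P ?I \<rho> + complex_of_real l * 1)
      = a + (1 + l) * b + l * c"
  proof -
    have c: "c = 1 - a - 2 * b" using w unfolding sym_weights_def by simp
    show ?thesis using PI unfolding c by (simp add: algebra_simps)
  qed
  finally have p: "p_rho D ?\<Omega> \<rho> = a + (1 + l) * b + l * c" .
  have "f_rho D \<psi> ?\<Omega> \<rho> = Re (tr_kron D ?\<Omega> ?P \<rho>)"
    unfolding f_rho_def using mtrace_kron_mult[OF homogeneous_op_carrier proj_carrier[OF d] \<rho>(1)] by simp
  also have "tr_kron D ?\<Omega> ?P \<rho>
      = complex_of_real (1 - l) * tr_kron D ?P ?P \<rho> + complex_of_real l * tr_kron D ?I ?P \<rho>"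
    by (rule tr_kron_linear_left) (rule \<Omega>_entry)
  also have "tr_kron D ?I ?P \<rho> = tr_kron D ?P ?I \<rho>" using tr_kron_swap[OF \<rho>(1,3)] .
  also have "Re (complex_of_real (1 - l) * tr_kron D ?P ?P \<rho> + complex_of_real l * tr_kron D ?P ?I \<rho>)
      = a + l * b"
    using PI unfolding a_def by (simp add: algebra_simps)
  finally have f: "f_rho D \<psi> ?\<Omega> \<rho> = a + l * b" .
  show ?thesis using w p f by blast
qed

section \<open>Separable permutation-invariant states\<close>

definition product_mixture ::
    "nat \<Rightarrow> real list \<Rightarrow> complex vec list \<Rightarrow> complex vec list \<Rightarrow> complex mat" where
  "product_mixture D ws xs ys = mat (D * D) (D * D) (\<lambda>(i, j). \<Sum>m<length ws.
     complex_of_real (ws ! m) * ((xs ! m $ (i div D) * ys ! m $ (i mod D))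
       * cnj (xs ! m $ (j div D) * ys ! m $ (j mod D))))"

lemma product_mixture_carrier [simp]: "product_mixture D ws xs ys \<in> carrier_mat (D * D) (D * D)"
  unfolding product_mixture_def by simp

lemma psd_product_mixture:
  assumes "\<And>m. m < length ws \<Longrightarrow> 0 \<le> ws ! m"
  shows "psd (D * D) (product_mixture D ws xs ys)"
proof -
  let ?M = "product_mixture D ws xs ys"
  define w where "w m i = xs ! m $ (i div D) * ys ! m $ (i mod D)" for m i
  have "0 \<le> Re (cinner v (?M *\<^sub>v v))" if v: "v \<in> carrier_vec (D * D)" for v
  proof -
    define z where "z m = (\<Sum>i<D * D. cnj (v $ i) * w m i)" for m
    have "cinner v (?M *\<^sub>v v) = (\<Sum>i<D * D. \<Sum>j<D * D. cnj (v $ i) * ?M $$ (i, j) * v $ j)"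
      by (rule cinner_mult_mat_vec[OF product_mixture_carrier v])
    also have "\<dots> = (\<Sum>i<D * D. \<Sum>j<D * D. \<Sum>m<length ws.
        complex_of_real (ws ! m) * ((cnj (v $ i) * w m i) * cnj (cnj (v $ j) * w m j)))"
      by (intro sum.cong refl) (simp add: product_mixture_def w_def sum_distrib_left sum_distrib_right mult_ac)
    also have "\<dots> = (\<Sum>i<D * D. \<Sum>m<length ws. \<Sum>j<D * D.
        complex_of_real (ws ! m) * ((cnj (v $ i) * w m i) * cnj (cnj (v $ j) * w m j)))"
      by (intro sum.cong refl sum.swap)
    also have "\<dots> = (\<Sum>m<length ws. \<Sum>i<D * D. \<Sum>j<D * D.
        complex_of_real (ws ! m) * ((cnj (v $ i) * w m i) * cnj (cnj (v $ j) * w m j)))"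
      by (rule sum.swap)
    also have "\<dots> = (\<Sum>m<length ws. complex_of_real (ws ! m) * (z m * cnj (z m)))"
      by (intro sum.cong refl) (simp only: z_def cnj_sum sum_product sum_distrib_left[symmetric])
    finally show ?thesis
      by (simp add: Re_sum complex_mult_cnj) (intro sum_nonneg mult_nonneg_nonneg, auto simp: assms)
  qed
  moreover have "hermitian (D * D) ?M"
    unfolding hermitian_def adj_def by (auto simp: product_mixture_def mult_ac)
  ultimately show ?thesis unfolding psd_def by blast
qed

lemma tr_kron_product_mixture:
  assumes "A \<in> carrier_mat D D" "B \<in> carrier_mat D D"
    and "\<And>m. m < length ws \<Longrightarrow> xs ! m \<in> carrier_vec D \<and> ys ! m \<in> carrier_vec D"
  shows "tr_kron D A B (product_mixture D ws xs ys) = (\<Sum>m<length ws. complex_of_real (ws ! m) *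
     (cinner (xs ! m) (A *\<^sub>v xs ! m) * cinner (ys ! m) (B *\<^sub>v ys ! m)))"
proof -
  define F where "F m a1 b1 = cnj (xs ! m $ a1) * A $$ (a1, b1) * xs ! m $ b1" for m a1 b1
  define G where "G m a2 b2 = cnj (ys ! m $ a2) * B $$ (a2, b2) * ys ! m $ b2" for m a2 b2
  have "tr_kron D A B (product_mixture D ws xs ys) = (\<Sum>a1<D. \<Sum>a2<D. \<Sum>b1<D. \<Sum>b2<D.
      \<Sum>m<length ws. complex_of_real (ws ! m) * (F m a1 b1 * G m a2 b2))"
    unfolding tr_kron_expand F_def G_def
    by (intro sum.cong refl) (simp add: product_mixture_def pair_index_less sum_distrib_left mult_ac)
  also have "\<dots> = (\<Sum>m<length ws. complex_of_real (ws ! m) *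
      (\<Sum>a1<D. \<Sum>a2<D. \<Sum>b1<D. \<Sum>b2<D. F m a1 b1 * G m a2 b2))"
    by (simp add: sum_distrib_left sum.swap[of _ "{..<length ws}"])
  also have "\<dots> = (\<Sum>m<length ws. complex_of_real (ws ! m) *
      ((\<Sum>a1<D. \<Sum>b1<D. F m a1 b1) * (\<Sum>a2<D. \<Sum>b2<D. G m a2 b2)))"
    by (simp add: sum_product)
  also have "\<dots> = (\<Sum>m<length ws. complex_of_real (ws ! m) *
      (cinner (xs ! m) (A *\<^sub>v xs ! m) * cinner (ys ! m) (B *\<^sub>v ys ! m)))"
    using assms unfolding F_def G_def by (intro sum.cong refl) (simp add: cinner_mult_mat_vec)
  finally show ?thesis .
qed

lemma swap_op_conj_product_mixture:
  "swap_op D * product_mixture D ws xs ys * swap_op D = product_mixture D ws ys xs"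
proof (rule eq_matI)
  fix i j assume "i < dim_row (product_mixture D ws ys xs)" "j < dim_col (product_mixture D ws ys xs)"
  then have ij: "i < D * D" "j < D * D" by (auto simp: product_mixture_def)
  then show "(swap_op D * product_mixture D ws xs ys * swap_op D) $$ (i, j) = product_mixture D ws ys xs $$ (i, j)"
    by (simp add: swap_op_conj_index product_mixture_def swap_index_less swap_index_div_mod mult_ac)
qed (auto simp: swap_op_def product_mixture_def)

definition pair_state :: "nat \<Rightarrow> complex vec \<Rightarrow> complex vec \<Rightarrow> real \<Rightarrow> real \<Rightarrow> real \<Rightarrow> complex mat" where
  "pair_state D \<psi> u a b c = product_mixture D [a, b, b, c] [\<psi>, \<psi>, u, u] [\<psi>, u, \<psi>, u]"

lemma pair_state_carrier [simp]: "pair_state D \<psi> u a b c \<in> carrier_mat (D * D) (D * D)"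
  unfolding pair_state_def by simp

lemma sum_lessThan_4: "(\<Sum>m<(4::nat). f m) = f 0 + f 1 + f 2 + (f 3 :: 'a::comm_monoid_add)"
  by (simp add: eval_nat_numeral add_ac)

lemma pair_state_perm_invariant: "perm_invariant D (pair_state D \<psi> u a b c)"
  unfolding perm_invariant_def pair_state_def swap_op_conj_product_mixture
  by (rule eq_matI) (auto simp: product_mixture_def sum_lessThan_4 add_ac)

lemma tr_kron_pair_state:
  assumes "A \<in> carrier_mat D D" "B \<in> carrier_mat D D" "\<psi> \<in> carrier_vec D" "u \<in> carrier_vec D"
  shows "tr_kron D A B (pair_state D \<psi> u a b c)
    = complex_of_real a * (cinner \<psi> (A *\<^sub>v \<psi>) * cinner \<psi> (B *\<^sub>v \<psi>))
    + complex_of_real b * (cinner \<psi> (A *\<^sub>v \<psi>) * cinner u (B *\<^sub>v u))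
    + complex_of_real b * (cinner u (A *\<^sub>v u) * cinner \<psi> (B *\<^sub>v \<psi>))
    + complex_of_real c * (cinner u (A *\<^sub>v u) * cinner u (B *\<^sub>v u))"
  unfolding pair_state_def using assms
  by (subst tr_kron_product_mixture) (auto simp: sum_lessThan_4 less_Suc_eq nth_Cons')

lemma pair_state_pass_fid:
  assumes \<psi>: "unit_vec D \<psi>" and u: "unit_vec D u" and "cinner \<psi> u = 0"
    and "sym_weights a b c" and \<Omega>: "\<Omega> \<in> carrier_mat D D" "\<Omega> *\<^sub>v \<psi> = \<psi>"
  defines "\<mu> \<equiv> Re (cinner u (\<Omega> *\<^sub>v u))"
  shows "density_op (D * D) (pair_state D \<psi> u a b c)"
    and "p_rho D \<Omega> (pair_state D \<psi> u a b c) = a + (1 + \<mu>) * b + \<mu> * c"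
    and "f_rho D \<psi> \<Omega> (pair_state D \<psi> u a b c) = a + \<mu> * b"
proof -
  have d: "\<psi> \<in> carrier_vec D" "u \<in> carrier_vec D" and \<psi>\<psi>: "cinner \<psi> \<psi> = 1" and uu: "cinner u u = 1"
    using \<psi> u unfolding unit_vec_def by auto
  have u\<psi>: "cinner u \<psi> = 0" using assms(3) cinner_commute[of u \<psi>] d by simp
  have proj_mult: "proj \<psi> *\<^sub>v v = cinner \<psi> v \<cdot>\<^sub>v \<psi>" if "v \<in> carrier_vec D" for v
    using that d
    by (intro eq_vecI) (auto simp: proj_def cinner_def scalar_prod_def atLeast0LessThan sum_distrib_left mult_ac)
  have "cinner v (proj \<psi> *\<^sub>v v) = cinner \<psi> v * cinner v \<psi>" if "v \<in> carrier_vec D" for v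
    using that d unfolding proj_mult[OF that] by (simp add: cinner_smult_right)
  then have P: "cinner \<psi> (proj \<psi> *\<^sub>v \<psi>) = 1" "cinner u (proj \<psi> *\<^sub>v u) = 0"
    using d \<psi>\<psi> u\<psi> by simp_all
  have \<Omega>\<psi>: "cinner \<psi> (\<Omega> *\<^sub>v \<psi>) = 1" using \<Omega>(2) \<psi>\<psi> by simp
  have "mtrace (pair_state D \<psi> u a b c) = tr_kron D (1\<^sub>m D) (1\<^sub>m D) (pair_state D \<psi> u a b c)"
    by (simp add: tr_kron_one_one)
  also have "\<dots> = complex_of_real (a + 2 * b + c)"
    using d \<psi>\<psi> uu by (simp add: tr_kron_pair_state algebra_simps)
  finally have "mtrace (pair_state D \<psi> u a b c) = 1"
    using assms(4) unfolding sym_weights_def by simp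
  moreover have "psd (D * D) (pair_state D \<psi> u a b c)"
    unfolding pair_state_def using assms(4) unfolding sym_weights_def
    by (intro psd_product_mixture) (auto simp: less_Suc_eq nth_Cons')
  ultimately show "density_op (D * D) (pair_state D \<psi> u a b c)" unfolding density_op_def by simp
  show "p_rho D \<Omega> (pair_state D \<psi> u a b c) = a + (1 + \<mu>) * b + \<mu> * c"
    unfolding p_rho_def \<mu>_def using \<Omega>(1) d
    by (simp add: mtrace_kron_mult tr_kron_pair_state \<Omega>\<psi> \<psi>\<psi> uu algebra_simps)
  show "f_rho D \<psi> \<Omega> (pair_state D \<psi> u a b c) = a + \<mu> * b"
    unfolding f_rho_def \<mu>_def using \<Omega>(1) d
    by (simp add: mtrace_kron_mult tr_kron_pair_state \<Omega>\<psi> P algebra_simps)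
qed

section \<open>The infimum defining \<open>F(1, \<delta>, \<Omega>)\<close>\<close>

lemma density_op_cmod_entry_le:
  assumes "density_op n \<rho>" "i < n" "j < n"
  shows "cmod (\<rho> $$ (i, j)) \<le> 1"
proof -
  have \<rho>: "psd n \<rho>" "\<rho> \<in> carrier_mat n n" "mtrace \<rho> = 1"
    using assms(1) unfolding density_op_def psd_def hermitian_def by auto
  have diag: "Re (\<rho> $$ (k, k)) \<le> 1" if "k < n" for k
  proof -
    have "Re (\<rho> $$ (k, k)) \<le> (\<Sum>l<n. Re (\<rho> $$ (l, l)))"
      using that psd_diag(1)[OF \<rho>(1)] by (intro member_le_sum) auto
    also have "\<dots> = 1" using \<rho>(2,3) unfolding mtrace_def by (simp flip: Re_sum)
    finally show ?thesis .
  qed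
  show ?thesis using psd_cmod_entry_le[OF \<rho>(1) assms(2,3)] diag[OF assms(2)] diag[OF assms(3)] by simp
qed

lemma verification_operator_cmod_entry_le:
  assumes "verification_operator D \<psi> \<Omega>" "r < D" "s < D"
  shows "cmod (\<Omega> $$ (r, s)) \<le> 1"
proof -
  have \<Omega>: "psd D \<Omega>" "psd D (1\<^sub>m D - \<Omega>)" "\<Omega> \<in> carrier_mat D D"
    using assms(1) unfolding verification_operator_def hermitian_def by auto
  have diag: "Re (\<Omega> $$ (k, k)) \<le> 1" if "k < D" for k
    using psd_diag(1)[OF \<Omega>(2) that] that \<Omega>(3) by simp
  show ?thesis using psd_cmod_entry_le[OF \<Omega>(1) assms(2,3)] diag[OF assms(2)] diag[OF assms(3)] by simp
qed

lemma proj_cmod_entry_le: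
  assumes "unit_vec D \<psi>" "r < D" "s < D"
  shows "cmod (proj \<psi> $$ (r, s)) \<le> 1"
proof -
  have d: "dim_vec \<psi> = D" using assms(1) unfolding unit_vec_def by simp
  have "(cmod (\<psi> $ k))\<^sup>2 \<le> 1" if "k < D" for k
  proof -
    have "(cmod (\<psi> $ k))\<^sup>2 \<le> (\<Sum>l<D. (cmod (\<psi> $ l))\<^sup>2)"
      using that by (intro member_le_sum) auto
    also have "\<dots> = 1"
      using cinner_self[of \<psi>] assms(1) unfolding unit_vec_def d by (metis of_real_eq_1_iff)
    finally show ?thesis .
  qed
  then have "cmod (\<psi> $ k) \<le> 1" if "k < D" for k
    using that by (simp add: power_le_one_iff abs_le_square_iff[of _ 1, simplified])
  then show ?thesis using assms(2,3) d by (simp add: proj_def norm_mult mult_le_one)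
qed

lemma tr_kron_cmod_le:
  assumes "\<And>r s. r < D \<Longrightarrow> s < D \<Longrightarrow> cmod (A $$ (r, s)) \<le> 1"
    "\<And>r s. r < D \<Longrightarrow> s < D \<Longrightarrow> cmod (B $$ (r, s)) \<le> 1"
    "\<And>i j. i < D * D \<Longrightarrow> j < D * D \<Longrightarrow> cmod (\<rho> $$ (i, j)) \<le> 1"
  shows "cmod (tr_kron D A B \<rho>) \<le> real (D * D * (D * D))"
proof -
  have "cmod (tr_kron D A B \<rho>)
      \<le> (\<Sum>i<D * D. \<Sum>j<D * D. cmod (A $$ (i div D, j div D) * B $$ (i mod D, j mod D) * \<rho> $$ (j, i)))"
    unfolding tr_kron_def by (rule order_trans[OF norm_sum sum_mono]) (rule norm_sum)
  also have "\<dots> \<le> (\<Sum>i<D * D. \<Sum>j<D * D. (1::real))"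
    unfolding norm_mult using assms div_less_square mod_less_square
    by (intro sum_mono mult_le_one) (auto intro: mult_le_one)
  finally show ?thesis by simp
qed

definition admissible_state :: "nat \<Rightarrow> complex mat \<Rightarrow> real \<Rightarrow> complex mat \<Rightarrow> bool" where
  "admissible_state D \<Omega> \<delta> \<rho> \<longleftrightarrow> \<rho> \<in> carrier_mat (D * D) (D * D) \<and> density_op (D * D) \<rho> \<and>
     perm_invariant D \<rho> \<and> \<delta> \<le> p_rho D \<Omega> \<rho>"

lemma F1_eq_Inf_image:
  "F1 D \<psi> \<delta> \<Omega> = Inf ((\<lambda>\<rho>. f_rho D \<psi> \<Omega> \<rho> / p_rho D \<Omega> \<rho>) ` Collect (admissible_state D \<Omega> \<delta>))"
  unfolding F1_def admissible_state_def by (rule arg_cong[of _ _ Inf]) auto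

lemma F1_le_ratio:
  assumes "unit_vec D \<psi>" "verification_operator D \<psi> \<Omega>" "0 < \<delta>" "admissible_state D \<Omega> \<delta> \<rho>"
  shows "F1 D \<psi> \<delta> \<Omega> \<le> f_rho D \<psi> \<Omega> \<rho> / p_rho D \<Omega> \<rho>"
  unfolding F1_eq_Inf_image
proof (rule cInf_lower)
  show "f_rho D \<psi> \<Omega> \<rho> / p_rho D \<Omega> \<rho> \<in> (\<lambda>\<rho>. f_rho D \<psi> \<Omega> \<rho> / p_rho D \<Omega> \<rho>) ` Collect (admissible_state D \<Omega> \<delta>)"
    using assms(4) by simp
  txt \<open>\<open>Inf\<close> on \<open>real\<close> is only meaningful for sets bounded below; a crude entrywise bound suffices.\<close>
  define K where "K = real (D * D * (D * D))"
  have "- K / \<delta> \<le> f_rho D \<psi> \<Omega> \<sigma> / p_rho D \<Omega> \<sigma>" if \<sigma>: "admissible_state D \<Omega> \<delta> \<sigma>" for \<sigma>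
  proof -
    have \<sigma>': "\<sigma> \<in> carrier_mat (D * D) (D * D)" "density_op (D * D) \<sigma>" "\<delta> \<le> p_rho D \<Omega> \<sigma>"
      using \<sigma> unfolding admissible_state_def by auto
    have \<Omega>: "\<Omega> \<in> carrier_mat D D" "\<psi> \<in> carrier_vec D"
      using assms(1,2) unfolding verification_operator_def hermitian_def unit_vec_def by auto
    have "cmod (tr_kron D \<Omega> (proj \<psi>) \<sigma>) \<le> K"
      unfolding K_def using verification_operator_cmod_entry_le[OF assms(2)]
        proj_cmod_entry_le[OF assms(1)] density_op_cmod_entry_le[OF \<sigma>'(2)]
      by (intro tr_kron_cmod_le) auto
    then have "- K \<le> f_rho D \<psi> \<Omega> \<sigma>"
      unfolding f_rho_def using \<Omega> \<sigma>'(1) abs_Re_le_cmod[of "tr_kron D \<Omega> (proj \<psi>) \<sigma>"]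
      by (simp add: mtrace_kron_mult)
    moreover have "- K / \<delta> \<le> - K / p_rho D \<Omega> \<sigma>"
      using \<sigma>'(3) assms(3) by (simp add: K_def divide_left_mono)
    ultimately show ?thesis
      using \<sigma>'(3) assms(3) by (smt (verit) divide_right_mono)
  qed
  then show "bdd_below ((\<lambda>\<rho>. f_rho D \<psi> \<Omega> \<rho> / p_rho D \<Omega> \<rho>) ` Collect (admissible_state D \<Omega> \<delta>))"
    by (intro bdd_belowI2) auto
qed

lemma F1_greatest:
  assumes "admissible_state D \<Omega> \<delta> \<rho>\<^sub>0"
    and "\<And>\<rho>. admissible_state D \<Omega> \<delta> \<rho> \<Longrightarrow> t \<le> f_rho D \<psi> \<Omega> \<rho> / p_rho D \<Omega> \<rho>"
  shows "t \<le> F1 D \<psi> \<delta> \<Omega>"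
  unfolding F1_eq_Inf_image using assms by (intro cInf_greatest) auto

section \<open>The reduced fractional program\<close>

lemma exists_sym_weights_pass_eq:
  fixes \<mu> \<delta> :: real
  assumes "0 \<le> \<mu>" "\<mu> < \<delta>" "\<delta> < 1"
  shows "\<exists>a b c. sym_weights a b c \<and> a + (1 + \<mu>) * b + \<mu> * c = \<delta> \<and>
     a + \<mu> * b \<le> max ((1 - sqrt (1 - \<delta>))\<^sup>2) (2 * \<delta> - 1)"
proof -
  define s where "s = sqrt (1 - \<delta>)"
  have s: "s\<^sup>2 = 1 - \<delta>" using assms unfolding s_def by simp
  define t where "t = (1 - \<delta>) / (1 - \<mu>)"
  have \<mu>1: "0 < 1 - \<mu>" using assms by simp
  have t: "t * (1 - \<mu>) = 1 - \<delta>" "0 < t" "t < 1"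
    unfolding t_def using \<mu>1 assms by (auto simp: divide_less_eq)
  show ?thesis
  proof (cases "2 * \<delta> - 1 \<le> \<mu>")
    case True
    have "1 * (1 - \<mu>) \<le> (2 * t) * (1 - \<mu>)" using t True by (simp add: algebra_simps)
    then have t_half: "1 \<le> 2 * t" using \<mu>1 by simp
    have pass: "0 + (1 + \<mu>) * (1 - t) + \<mu> * (2 * t - 1) = \<delta>" using t by (simp add: algebra_simps)
    have "(1 - t) * (1 - \<mu>) = 1 - \<mu> - s\<^sup>2" using t s by (simp add: algebra_simps)
    then have "\<mu> * (1 - t) * (1 - \<mu>) = \<mu> * (1 - \<mu> - s\<^sup>2)" by (simp only: mult.assoc)
    moreover have "(1 - s)\<^sup>2 * (1 - \<mu>) - \<mu> * (1 - \<mu> - s\<^sup>2) = (\<mu> - (1 - s))\<^sup>2"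
      by (simp add: power2_eq_square algebra_simps)
    ultimately have "\<mu> * (1 - t) * (1 - \<mu>) \<le> (1 - s)\<^sup>2 * (1 - \<mu>)"
      using zero_le_power2[of "\<mu> - (1 - s)"] by linarith
    then have "0 + \<mu> * (1 - t) \<le> (1 - s)\<^sup>2" using \<mu>1 by simp
    then show ?thesis
      using t t_half pass unfolding s_def
      by (intro exI[of _ 0] exI[of _ "1 - t"] exI[of _ "2 * t - 1"]) (auto simp: sym_weights_def)
  next
    case False
    have "(2 * t) * (1 - \<mu>) < 1 * (1 - \<mu>)" using t False by (simp add: algebra_simps)
    then have "2 * t < 1" using \<mu>1 by simp
    then have "sym_weights (1 - 2 * t) t 0" using t unfolding sym_weights_def by simp
    moreover have "(1 - 2 * t) + (1 + \<mu>) * t + \<mu> * 0 = \<delta>" using t by (simp add: algebra_simps)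
    moreover have "0 \<le> t * \<mu>" using t assms by simp
    then have "1 - 2 * t + \<mu> * t \<le> 2 * \<delta> - 1" using t by (simp add: algebra_simps)
    then have "1 - 2 * t + \<mu> * t \<le> max ((1 - sqrt (1 - \<delta>))\<^sup>2) (2 * \<delta> - 1)" by simp
    ultimately show ?thesis by blast
  qed
qed

lemma exists_sym_weights_below:
  fixes \<mu> \<delta> \<epsilon> :: real
  assumes "0 \<le> \<mu>" "\<mu> \<le> 1" "0 < \<delta>" "\<delta> < 1"
    and gt: "\<delta> * (1 - \<epsilon>) > max (2 - 2 * sqrt (1 - \<delta>) - \<delta>) (2 * \<delta> - 1)"
  shows "\<exists>a b c. sym_weights a b c \<and> \<delta> \<le> a + (1 + \<mu>) * b + \<mu> * c \<and>
     (a + \<mu> * b) / (a + (1 + \<mu>) * b + \<mu> * c) < 1 - \<epsilon>"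
proof -
  have "(1 - sqrt (1 - \<delta>))\<^sup>2 = 2 - 2 * sqrt (1 - \<delta>) - \<delta>"
    using assms(4) by (simp add: power2_eq_square algebra_simps)
  then have gt': "max ((1 - sqrt (1 - \<delta>))\<^sup>2) (2 * \<delta> - 1) < \<delta> * (1 - \<epsilon>)"
    using gt by simp
  show ?thesis
  proof (cases "\<delta> \<le> \<mu>")
    case True
    have "0 < \<delta> * (1 - \<epsilon>)" using gt' zero_le_power2[of "1 - sqrt (1 - \<delta>)"] by linarith
    then have "0 < 1 - \<epsilon>" using assms(3) by (simp add: zero_less_mult_iff)
    then show ?thesis
      using True assms by (intro exI[of _ 0] exI[of _ 0] exI[of _ 1]) (auto simp: sym_weights_def)
  next
    case False
    then obtain a b c where "sym_weights a b c" "a + (1 + \<mu>) * b + \<mu> * c = \<delta>"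
      and "a + \<mu> * b \<le> max ((1 - sqrt (1 - \<delta>))\<^sup>2) (2 * \<delta> - 1)"
      using exists_sym_weights_pass_eq[OF assms(1) _ assms(4)] by force
    moreover have "a + \<mu> * b < \<delta> * (1 - \<epsilon>)" using calculation(3) gt' by (rule le_less_trans)
    then have "(a + \<mu> * b) / \<delta> < 1 - \<epsilon>" using assms(3) by (simp add: divide_less_eq mult.commute)
    ultimately show ?thesis by auto
  qed
qed

lemma weighted_fid_ge_root_parameter:
  fixes s \<delta> :: real
  assumes "0 < s" "s < 1" "\<delta> = 1 - s\<^sup>2" and w: "sym_weights a b c"
    and p: "\<delta> \<le> a + (1 + (1 - s)) * b + (1 - s) * c"
  shows "(1 - s)\<^sup>2 * (a + (1 + (1 - s)) * b + (1 - s) * c) \<le> \<delta> * (a + (1 - s) * b)"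
proof -
  have c: "c = 1 - a - 2 * b" using w unfolding sym_weights_def by simp
  have "s * (1 - s) \<le> s * (a + b)"
    using p unfolding c assms(3) by (simp add: power2_eq_square algebra_simps)
  then have "(1 - s) * (1 - s) \<le> (1 - s) * (a + b)" using assms(1,2) by simp
  moreover have "(1 - s) * a \<le> (1 + s\<^sup>2) * a"
  proof -
    have "1 - s \<le> 1 + s\<^sup>2" using assms(1) by (smt (verit) zero_le_power2)
    then show ?thesis using w unfolding sym_weights_def by (intro mult_right_mono) auto
  qed
  ultimately have "0 \<le> (1 + s\<^sup>2) * a + (1 - s) * b - (1 - s)\<^sup>2"
    by (simp add: power2_eq_square algebra_simps)
  then have "0 \<le> (1 - s) * ((1 + s\<^sup>2) * a + (1 - s) * b - (1 - s)\<^sup>2)"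
    using assms(2) by simp
  also have "\<dots> = \<delta> * (a + (1 - s) * b) - (1 - s)\<^sup>2 * (a + (1 + (1 - s)) * b + (1 - s) * c)"
    unfolding c assms(3) by (simp add: power2_eq_square algebra_simps)
  finally show ?thesis by simp
qed

lemma weighted_fid_ge_zero_parameter:
  fixes \<delta> :: real
  assumes "0 < \<delta>" "sym_weights a b c" "\<delta> \<le> a + b"
  shows "(2 * \<delta> - 1) * (a + b) \<le> \<delta> * a"
proof -
  have c: "c = 1 - a - 2 * b" using assms(2) unfolding sym_weights_def by simp
  have "\<delta> * a - (2 * \<delta> - 1) * (a + b) = (a + b - \<delta>) + \<delta> * c"
    unfolding c by (simp add: algebra_simps)
  moreover have "0 \<le> \<delta> * c" using assms unfolding sym_weights_def by simp
  ultimately show ?thesis using assms(3) by simp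
qed

lemma exists_homogeneous_parameter:
  fixes \<delta> \<epsilon> :: real
  assumes "0 < \<delta>" "\<delta> < 1"
    and le: "\<delta> * (1 - \<epsilon>) \<le> max (2 - 2 * sqrt (1 - \<delta>) - \<delta>) (2 * \<delta> - 1)"
  shows "\<exists>l. 0 \<le> l \<and> l < 1 \<and> (\<forall>a b c. sym_weights a b c \<longrightarrow> \<delta> \<le> a + (1 + l) * b + l * c \<longrightarrow>
     1 - \<epsilon> \<le> (a + l * b) / (a + (1 + l) * b + l * c))"
proof -
  define s where "s = sqrt (1 - \<delta>)"
  have s: "0 < s" "s < 1" "s\<^sup>2 = 1 - \<delta>" using assms unfolding s_def by auto
  define M where "M = max ((1 - s)\<^sup>2) (2 * \<delta> - 1)"
  have le': "\<delta> * (1 - \<epsilon>) \<le> M"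
    using le s unfolding M_def s_def[symmetric] by (simp add: power2_eq_square algebra_simps)
  have ratio: "1 - \<epsilon> \<le> f / p" if "M * p \<le> \<delta> * f" "\<delta> \<le> p" for f p
  proof -
    have "\<delta> * (1 - \<epsilon>) * p \<le> M * p" using le' that(2) assms(1) by (intro mult_right_mono) auto
    then have "\<delta> * ((1 - \<epsilon>) * p) \<le> \<delta> * f" using that(1) by (simp add: mult_ac)
    then have "(1 - \<epsilon>) * p \<le> f" using assms(1) by simp
    then show ?thesis using that(2) assms(1) by (simp add: le_divide_eq)
  qed
  show ?thesis
  proof (cases "2 * \<delta> - 1 \<le> (1 - s)\<^sup>2")
    case True
    then have M: "M = (1 - s)\<^sup>2" unfolding M_def by simp
    have \<delta>: "\<delta> = 1 - s\<^sup>2" using s(3) by simp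
    show ?thesis
    proof (intro exI[of _ "1 - s"] conjI allI impI)
      fix a b c assume "sym_weights a b c" and p: "\<delta> \<le> a + (1 + (1 - s)) * b + (1 - s) * c"
      from weighted_fid_ge_root_parameter[OF s(1,2) \<delta> this] p
      show "1 - \<epsilon> \<le> (a + (1 - s) * b) / (a + (1 + (1 - s)) * b + (1 - s) * c)"
        unfolding M[symmetric] by (rule ratio)
    qed (use s in auto)
  next
    case False
    then have M: "M = 2 * \<delta> - 1" unfolding M_def by simp
    show ?thesis
    proof (intro exI[of _ 0] conjI allI impI)
      fix a b c assume "sym_weights a b c" and p: "\<delta> \<le> a + (1 + 0) * b + 0 * c"
      then have "M * (a + (1 + 0) * b + 0 * c) \<le> \<delta> * (a + 0 * b)"
        unfolding M using weighted_fid_ge_zero_parameter[OF assms(1)] by simp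
      then show "1 - \<epsilon> \<le> (a + 0 * b) / (a + (1 + 0) * b + 0 * c)" using p by (rule ratio)
    qed auto
  qed
qed

lemma threshold_iff_min_bound:
  fixes \<delta> \<epsilon> :: real
  assumes "0 < \<delta>" "\<delta> < 1" "0 < \<epsilon>" "\<epsilon> < 1"
  shows "\<delta> * (1 - \<epsilon>) \<le> max (2 - 2 * sqrt (1 - \<delta>) - \<delta>) (2 * \<delta> - 1)
     \<longleftrightarrow> \<delta> \<ge> min (4 * (1 - \<epsilon>) / (2 - \<epsilon>)\<^sup>2) (1 / (1 + \<epsilon>))"
proof -
  define s where "s = sqrt (1 - \<delta>)"
  have s: "0 < s" "s < 1" "s\<^sup>2 = 1 - \<delta>" using assms unfolding s_def by auto
  have M1: "2 - 2 * sqrt (1 - \<delta>) - \<delta> = (1 - s)\<^sup>2"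
    using s unfolding s_def[symmetric] by (simp add: power2_eq_square algebra_simps)
  have linear: "\<delta> * (1 - \<epsilon>) \<le> 2 * \<delta> - 1 \<longleftrightarrow> 1 / (1 + \<epsilon>) \<le> \<delta>"
    using assms by (simp add: divide_le_eq algebra_simps)
  have \<delta>: "\<delta> = 1 - s * s" using s(3) by (simp add: power2_eq_square)
  have factor: "\<delta> * (1 - \<epsilon>) = (1 - s) * ((1 + s) * (1 - \<epsilon>))" unfolding \<delta> by (simp add: algebra_simps)
  have "\<delta> * (1 - \<epsilon>) \<le> (1 - s)\<^sup>2 \<longleftrightarrow> (1 - s) * ((1 + s) * (1 - \<epsilon>)) \<le> (1 - s) * (1 - s)"
    unfolding factor by (simp add: power2_eq_square)
  also have "\<dots> \<longleftrightarrow> (1 + s) * (1 - \<epsilon>) \<le> 1 - s" using s by simp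
  also have "\<dots> \<longleftrightarrow> s * (2 - \<epsilon>) \<le> \<epsilon>" by (simp add: algebra_simps)
  also have "\<dots> \<longleftrightarrow> s \<le> \<epsilon> / (2 - \<epsilon>)" using assms by (simp add: le_divide_eq)
  also have "\<dots> \<longleftrightarrow> s\<^sup>2 \<le> (\<epsilon> / (2 - \<epsilon>))\<^sup>2"
  proof -
    have "0 \<le> \<epsilon> / (2 - \<epsilon>)" using assms by simp
    then show ?thesis using s(1) power_mono_iff[of s "\<epsilon> / (2 - \<epsilon>)" 2] by linarith
  qed
  also have "\<dots> \<longleftrightarrow> 1 - \<delta> \<le> \<epsilon>\<^sup>2 / (2 - \<epsilon>)\<^sup>2" using s by (simp add: power_divide)
  also have "\<dots> \<longleftrightarrow> 4 * (1 - \<epsilon>) / (2 - \<epsilon>)\<^sup>2 \<le> \<delta>"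
  proof -
    have "(2 - \<epsilon>)\<^sup>2 > 0" using assms by simp
    then have "4 * (1 - \<epsilon>) / (2 - \<epsilon>)\<^sup>2 = 1 - \<epsilon>\<^sup>2 / (2 - \<epsilon>)\<^sup>2"
      by (simp add: field_simps power2_eq_square)
    then show ?thesis by linarith
  qed
  finally show ?thesis unfolding M1 le_max_iff_disj min_le_iff_disj using linear by blast
qed

lemma min_bound_cases:
  fixes \<epsilon> :: real
  assumes "0 < \<epsilon>" "\<epsilon> < 1"
  shows "min (4 * (1 - \<epsilon>) / (2 - \<epsilon>)\<^sup>2) (1 / (1 + \<epsilon>))
           = (if \<epsilon> \<le> 4/5 then 1 / (1 + \<epsilon>) else 4 * (1 - \<epsilon>) / (2 - \<epsilon>)\<^sup>2)"
proof -
  have "1 / (1 + \<epsilon>) \<le> 4 * (1 - \<epsilon>) / (2 - \<epsilon>)\<^sup>2 \<longleftrightarrow> (2 - \<epsilon>)\<^sup>2 \<le> 4 * (1 - \<epsilon>) * (1 + \<epsilon>)"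
    using assms by (simp add: divide_le_eq le_divide_eq mult_ac)
  also have "\<dots> \<longleftrightarrow> \<epsilon> \<le> 4/5"
    using assms by (simp add: power2_eq_square algebra_simps)
  finally show ?thesis by (auto simp: min_def)
qed

lemma verifiable_if_threshold:
  assumes "2 \<le> D" "unit_vec D \<psi>" "0 < \<delta>" "\<delta> < 1"
    and "\<delta> * (1 - \<epsilon>) \<le> max (2 - 2 * sqrt (1 - \<delta>) - \<delta>) (2 * \<delta> - 1)"
  shows "\<exists>\<Omega>. verification_operator D \<psi> \<Omega> \<and> 1 - \<epsilon> \<le> F1 D \<psi> \<delta> \<Omega>"
proof -
  obtain l where l: "0 \<le> l" "l < 1"
    and bound: "\<And>a b c. sym_weights a b c \<Longrightarrow> \<delta> \<le> a + (1 + l) * b + l * c \<Longrightarrow>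
      1 - \<epsilon> \<le> (a + l * b) / (a + (1 + l) * b + l * c)"
    using exists_homogeneous_parameter[OF assms(3-5)] by blast
  let ?\<Omega> = "homogeneous_op D \<psi> l"
  have \<Omega>: "verification_operator D \<psi> ?\<Omega>"
    using verification_operator_homogeneous_op[OF assms(2) l] .
  obtain u where u: "unit_vec D u" "cinner \<psi> u = 0"
    using exists_unit_orthogonal[OF assms(1,2)] by blast
  have "sym_weights 1 0 0" unfolding sym_weights_def by simp
  note pure = pair_state_pass_fid[OF assms(2) u this homogeneous_op_carrier]
  have "?\<Omega> *\<^sub>v \<psi> = \<psi>" using \<Omega> unfolding verification_operator_def by simp
  then have "admissible_state D ?\<Omega> \<delta> (pair_state D \<psi> u 1 0 0)"
    using pure pair_state_perm_invariant assms(4) unfolding admissible_state_def by simp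
  moreover have "1 - \<epsilon> \<le> f_rho D \<psi> ?\<Omega> \<rho> / p_rho D ?\<Omega> \<rho>" if "admissible_state D ?\<Omega> \<delta> \<rho>" for \<rho>
  proof -
    have \<rho>: "\<rho> \<in> carrier_mat (D * D) (D * D)" "density_op (D * D) \<rho>" "perm_invariant D \<rho>"
      using that unfolding admissible_state_def by auto
    obtain a b c where "sym_weights a b c"
      and "p_rho D ?\<Omega> \<rho> = a + (1 + l) * b + l * c" "f_rho D \<psi> ?\<Omega> \<rho> = a + l * b"
      using homogeneous_op_pass_fid[OF assms(2) \<rho>, of l] by blast
    then show ?thesis using bound that unfolding admissible_state_def by simp
  qed
  ultimately have "1 - \<epsilon> \<le> F1 D \<psi> \<delta> ?\<Omega>" by (rule F1_greatest)
  then show ?thesis using \<Omega> by blast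
qed

lemma threshold_if_verifiable:
  assumes "2 \<le> D" "unit_vec D \<psi>" "0 < \<delta>" "\<delta> < 1"
    and \<Omega>: "verification_operator D \<psi> \<Omega>" and F1: "1 - \<epsilon> \<le> F1 D \<psi> \<delta> \<Omega>"
  shows "\<delta> * (1 - \<epsilon>) \<le> max (2 - 2 * sqrt (1 - \<delta>) - \<delta>) (2 * \<delta> - 1)"
proof (rule ccontr)
  assume "\<not> \<delta> * (1 - \<epsilon>) \<le> max (2 - 2 * sqrt (1 - \<delta>) - \<delta>) (2 * \<delta> - 1)"
  then have gt: "\<delta> * (1 - \<epsilon>) > max (2 - 2 * sqrt (1 - \<delta>) - \<delta>) (2 * \<delta> - 1)"
    by (simp only: not_le)
  obtain u where u: "unit_vec D u" "cinner \<psi> u = 0"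
    using exists_unit_orthogonal[OF assms(1,2)] by blast
  have \<Omega>': "\<Omega> \<in> carrier_mat D D" "\<Omega> *\<^sub>v \<psi> = \<psi>" "psd D \<Omega>" "psd D (1\<^sub>m D - \<Omega>)"
    using \<Omega> unfolding verification_operator_def hermitian_def by auto
  have uc: "u \<in> carrier_vec D" "cinner u u = 1" using u unfolding unit_vec_def by auto
  define \<mu> where "\<mu> = Re (cinner u (\<Omega> *\<^sub>v u))"
  have "0 \<le> \<mu>" using \<Omega>'(3) uc unfolding psd_def \<mu>_def by blast
  moreover have "0 \<le> Re (cinner u ((1\<^sub>m D - \<Omega>) *\<^sub>v u))" using \<Omega>'(4) uc unfolding psd_def by blast
  then have "\<mu> \<le> 1" using uc cinner_one_minus_mat[OF \<Omega>'(1) uc(1)] unfolding \<mu>_def by simp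
  ultimately obtain a b c where w: "sym_weights a b c" and p: "\<delta> \<le> a + (1 + \<mu>) * b + \<mu> * c"
    and less: "(a + \<mu> * b) / (a + (1 + \<mu>) * b + \<mu> * c) < 1 - \<epsilon>"
    using exists_sym_weights_below[OF _ _ assms(3,4) gt] by blast
  note \<rho> = pair_state_pass_fid[OF assms(2) u w \<Omega>'(1,2), folded \<mu>_def]
  have "admissible_state D \<Omega> \<delta> (pair_state D \<psi> u a b c)"
    using \<rho> p pair_state_perm_invariant unfolding admissible_state_def by simp
  from F1_le_ratio[OF assms(2) \<Omega> assms(3) this] show False
    using F1 less \<rho> by simp
qed

theorem corollary5:
  fixes D :: nat and \<psi> :: "complex vec" and \<epsilon> \<delta> :: real
  assumes "D \<ge> 2" and "unit_vec D \<psi>"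
    and "0 < \<epsilon>" "\<epsilon> < 1" and "0 < \<delta>" "\<delta> < 1"
  shows "((\<exists>\<Omega>. verification_operator D \<psi> \<Omega> \<and> F1 D \<psi> \<delta> \<Omega> \<ge> 1 - \<epsilon>)
            \<longleftrightarrow> \<delta> * (1 - \<epsilon>) \<le> max (2 - 2 * sqrt (1 - \<delta>) - \<delta>) (2 * \<delta> - 1))
       \<and> ((\<exists>\<Omega>. verification_operator D \<psi> \<Omega> \<and> F1 D \<psi> \<delta> \<Omega> \<ge> 1 - \<epsilon>)
            \<longleftrightarrow> \<delta> \<ge> min (4 * (1 - \<epsilon>) / (2 - \<epsilon>)^2) (1 / (1 + \<epsilon>)))
       \<and> min (4 * (1 - \<epsilon>) / (2 - \<epsilon>)^2) (1 / (1 + \<epsilon>))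
           = (if \<epsilon> \<le> 4/5 then 1 / (1 + \<epsilon>) else 4 * (1 - \<epsilon>) / (2 - \<epsilon>)^2)"
proof -
  have "(\<exists>\<Omega>. verification_operator D \<psi> \<Omega> \<and> F1 D \<psi> \<delta> \<Omega> \<ge> 1 - \<epsilon>)
      \<longleftrightarrow> \<delta> * (1 - \<epsilon>) \<le> max (2 - 2 * sqrt (1 - \<delta>) - \<delta>) (2 * \<delta> - 1)"
    using verifiable_if_threshold[OF assms(1,2,5,6)] threshold_if_verifiable[OF assms(1,2,5,6)]
    by blast
  then show ?thesis
    using threshold_iff_min_bound[OF assms(5,6,3,4)] min_bound_cases[OF assms(3,4)] by simp
qed

end
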